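(* For every $r\ge2$ there is a bijection between the set of partitions of the highest root $\tilde\alpha_{B_r}=\varepsilon_1+\varepsilon_2$ of type $B_r$ into positive roots of $B_r$ and the set $\mathrm{JS}(\langle1,1\rangle,\langle1,1\rangle,r)$. In particular $K_{B_r}(\tilde\alpha_{B_r})=\mathsf{js}(\langle1,1\rangle,\langle1,1\rangle,r)$.
   Context: The positive roots of type $B_r$ are $\Phi^+_{B_r}=\{\varepsilon_i-\varepsilon_j,\ \varepsilon_i+\varepsilon_j:1\le i<j\le r\}\cup\{\varepsilon_i:1\le i\le r\}\subset\mathbb{R}^r$; a partition of $\mu$ is a finite multiset of positive roots summing to $\mu$, and $K_{B_r}(\mu)$ is the number of them. A juggling state is a finitely supported integer vector $\langle s_1,s_2,\dots\rangle$ indexed by heights (trailing zeros omitted). A juggling sequence of length $n$ from $\mathbf{a}$ to $\mathbf{b}$ is a sequence $(\mathbf{s}_0,\dots,\mathbf{s}_n)$ with $\mathbf{s}_0=\mathbf{a}$, $\mathbf{s}_n=\mathbf{b}$ such that for each $i$ there are nonnegative integers $c^{(i)}_k$ (finitely many nonzero) with $\sum_k c^{(i)}_k=(\mathbf{s}_{i-1})_1$ and $(\mathbf{s}_i)_k=(\mathbf{s}_{i-1})_{k+1}+c^{(i)}_k$ for all $k\ge1$. $\mathrm{JS}(\mathbf{a},\mathbf{b},n)$ is the set of these and $\mathsf{js}$ its cardinality. *)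

theory Defs
  imports Main "HOL-Library.Multiset"
begin

text \<open>Vectors in R^r (with integer coordinates) are represented as functions
  nat => int; coordinate i (1 <= i <= r) is the value at i.\<close>

definition eps :: "nat \<Rightarrow> nat \<Rightarrow> int" where
  "eps i = (\<lambda>k. if k = i then 1 else 0)"

definition posroots_B :: "nat \<Rightarrow> (nat \<Rightarrow> int) set" where
  "posroots_B r =
     {(\<lambda>k. eps i k - eps j k) | i j. 1 \<le> i \<and> i < j \<and> j \<le> r}
   \<union> {(\<lambda>k. eps i k + eps j k) | i j. 1 \<le> i \<and> i < j \<and> j \<le> r}
   \<union> {eps i | i. 1 \<le> i \<and> i \<le> r}"

definition root_partitions_B :: "nat \<Rightarrow> (nat \<Rightarrow> int) \<Rightarrow> (nat \<Rightarrow> int) multiset set" where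
  "root_partitions_B r mu =
     {M. set_mset M \<subseteq> posroots_B r \<and> (\<lambda>k. \<Sum>\<^sub># (image_mset (\<lambda>v. v k) M)) = mu}"

definition K_B :: "nat \<Rightarrow> (nat \<Rightarrow> int) \<Rightarrow> nat" where
  "K_B r mu = card (root_partitions_B r mu)"

definition highest_root_B :: "nat \<Rightarrow> int" where
  "highest_root_B = (\<lambda>k. eps 1 k + eps 2 k)"

text \<open>Juggling states: finitely supported integer vectors indexed by heights 1,2,...;
  represented as nat => int with value 0 at the unused index 0.\<close>
definition juggling_state :: "(nat \<Rightarrow> int) \<Rightarrow> bool" where
  "juggling_state s \<longleftrightarrow> s 0 = 0 \<and> finite {k. s k \<noteq> 0}"

definition juggling_step :: "(nat \<Rightarrow> int) \<Rightarrow> (nat \<Rightarrow> int) \<Rightarrow> bool" where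
  "juggling_step s t \<longleftrightarrow>
     (\<exists>c :: nat \<Rightarrow> nat. finite {k. c k \<noteq> 0} \<and> c 0 = 0 \<and>
        int (\<Sum>k\<in>{k. c k \<noteq> 0}. c k) = s 1 \<and>
        (\<forall>k\<ge>1. t k = s (k + 1) + int (c k)))"

definition JS :: "(nat \<Rightarrow> int) \<Rightarrow> (nat \<Rightarrow> int) \<Rightarrow> nat \<Rightarrow> (nat \<Rightarrow> int) list set" where
  "JS a b n = {ss. length ss = Suc n \<and> ss ! 0 = a \<and> ss ! n = b \<and>
      (\<forall>i\<le>n. juggling_state (ss ! i)) \<and>
      (\<forall>i. 1 \<le> i \<and> i \<le> n \<longrightarrow> juggling_step (ss ! (i - 1)) (ss ! i))}"

definition js :: "(nat \<Rightarrow> int) \<Rightarrow> (nat \<Rightarrow> int) \<Rightarrow> nat \<Rightarrow> nat" where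
  "js a b n = card (JS a b n)"

definition state11 :: "nat \<Rightarrow> int" where
  "state11 = (\<lambda>k. if k = 1 \<or> k = 2 then 1 else 0)"

end

theory Submission
  imports Defs
begin

text \<open>A juggling sequence is determined by its throws: let \<open>D i j\<close> be the number of balls thrown
  at beat \<open>i\<close> landing at beat \<open>j\<close>. For sequences from \<open>\<langle>1,1\<rangle>\<close> to \<open>\<langle>1,1\<rangle>\<close> of length \<open>r\<close>
  such a matrix is a flow on the nodes \<open>1, \<dots>, r + 2\<close> with unit sources at \<open>1\<close> and \<open>2\<close>,
  conservation at \<open>1, \<dots>, r\<close> and exactly one unit entering each of the sinks \<open>r + 1, r + 2\<close>.
  In a partition of \<open>\<epsilon>\<^sub>1 + \<epsilon>\<^sub>2\<close> the multiplicity of \<open>\<epsilon>\<^sub>i - \<epsilon>\<^sub>j\<close> is read as the flow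
  from \<open>i\<close> to \<open>j\<close>. Comparing coordinate sums, the remaining roots are either two short roots
  \<open>\<epsilon>\<^sub>a, \<epsilon>\<^sub>b\<close> or one long root \<open>\<epsilon>\<^sub>a + \<epsilon>\<^sub>b\<close>, which is exactly the information of which
  nodes feed the two sinks; the coordinate equations of the partition are then flow conservation.\<close>

section \<open>Juggling sequences as throw matrices\<close>

text \<open>The number of balls at height \<open>k\<close> after \<open>n\<close> beats, starting in state \<open>a\<close> and throwing
  \<open>D i j\<close> balls at beat \<open>i\<close> to land at beat \<open>j\<close>.\<close>
definition throw_state :: "(nat \<Rightarrow> int) \<Rightarrow> (nat \<Rightarrow> nat \<Rightarrow> nat) \<Rightarrow> nat \<Rightarrow> nat \<Rightarrow> int" where
  "throw_state a D n k = (if k = 0 then 0 else a (n + k) + int (\<Sum>i\<in>{1..n}. D i (n + k)))"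

definition throw_matrices :: "(nat \<Rightarrow> int) \<Rightarrow> (nat \<Rightarrow> int) \<Rightarrow> nat \<Rightarrow> (nat \<Rightarrow> nat \<Rightarrow> nat) set" where
  "throw_matrices a b n = {D.
     (\<forall>i j. D i j \<noteq> 0 \<longrightarrow> 1 \<le> i \<and> i \<le> n \<and> i < j) \<and>
     (\<forall>i\<in>{1..n}. int (\<Sum>j | D i j \<noteq> 0. D i j) = throw_state a D (i - 1) 1) \<and>
     throw_state a D n = b}"

definition throw_sequence :: "(nat \<Rightarrow> int) \<Rightarrow> nat \<Rightarrow> (nat \<Rightarrow> nat \<Rightarrow> nat) \<Rightarrow> (nat \<Rightarrow> int) list" where
  "throw_sequence a n D = map (throw_state a D) [0..<Suc n]"

definition throws_of :: "nat \<Rightarrow> (nat \<Rightarrow> int) list \<Rightarrow> nat \<Rightarrow> nat \<Rightarrow> nat" where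
  "throws_of n ss i j =
     (if 1 \<le> i \<and> i \<le> n \<and> i < j then nat ((ss ! i) (j - i) - (ss ! (i - 1)) (j - i + 1)) else 0)"

lemma length_throw_sequence [simp]: "length (throw_sequence a n D) = Suc n"
  by (simp add: throw_sequence_def)

lemma nth_throw_sequence: "m \<le> n \<Longrightarrow> throw_sequence a n D ! m = throw_state a D m"
  unfolding throw_sequence_def by (simp del: upt_Suc)

lemma juggling_state_bounded:
  assumes "juggling_state s"
  obtains N where "\<And>k. N < k \<Longrightarrow> s k = 0"
  using assms unfolding juggling_state_def
  by (metis (mono_tags) finite_nat_set_iff_bounded mem_Collect_eq order_less_imp_not_less)

lemma throw_state_Suc:
  "1 \<le> k \<Longrightarrow> throw_state a D (Suc n) k = throw_state a D n (k + 1) + int (D (Suc n) (Suc n + k))"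
  by (simp add: throw_state_def)

lemma throw_state_0: "a 0 = 0 \<Longrightarrow> throw_state a D 0 = a"
  by (auto simp: throw_state_def fun_eq_iff)

lemma sum_shifted_support:
  fixes f :: "nat \<Rightarrow> nat"
  assumes "\<And>j. j \<le> m \<Longrightarrow> f j = 0"
  shows "(\<Sum>k | f (m + k) \<noteq> 0. f (m + k)) = (\<Sum>j | f j \<noteq> 0. f j)"
proof (rule sum.reindex_bij_betw)
  show "bij_betw ((+) m) {k. f (m + k) \<noteq> 0} {j. f j \<noteq> 0}"
  proof (rule bij_betw_imageI)
    show "(+) m ` {k. f (m + k) \<noteq> 0} = {j. f j \<noteq> 0}"
    proof (intro equalityI subsetI)
      fix j assume "j \<in> {j. f j \<noteq> 0}"
      then have "m < j" using assms by (metis mem_Collect_eq not_less)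
      then show "j \<in> (+) m ` {k. f (m + k) \<noteq> 0}"
        using \<open>j \<in> _\<close> by (intro image_eqI[of _ _ "j - m"]) auto
    qed auto
  qed simp
qed

lemma throw_matrix_bounded:
  assumes D: "D \<in> throw_matrices a b n" and a: "juggling_state a" and b: "juggling_state b"
  obtains N where "\<And>i j. N < j \<Longrightarrow> D i j = 0"
proof -
  obtain Na where Na: "\<And>k. Na < k \<Longrightarrow> a k = 0" using juggling_state_bounded[OF a] by blast
  obtain Nb where Nb: "\<And>k. Nb < k \<Longrightarrow> b k = 0" using juggling_state_bounded[OF b] by blast
  have supp: "\<And>i j. D i j \<noteq> 0 \<Longrightarrow> 1 \<le> i \<and> i \<le> n \<and> i < j"
    and final: "throw_state a D n = b" using D unfolding throw_matrices_def by auto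
  have "D i j = 0" if "Na + Nb + n < j" for i j
  proof -
    have "b (j - n) = a j + int (\<Sum>i\<in>{1..n}. D i j)"
      using that fun_cong[OF final, of "j - n"] by (simp add: throw_state_def)
    then have "(\<Sum>i\<in>{1..n}. D i j) = 0" using that Na Nb by (simp del: of_nat_sum)
    then show ?thesis using supp[of i j] by (metis atLeastAtMost_iff finite_atLeastAtMost sum_eq_0_iff)
  qed
  then show ?thesis using that by blast
qed

lemma throw_sequence_in_JS:
  assumes D: "D \<in> throw_matrices a b n" and a: "juggling_state a" and b: "juggling_state b"
  shows "throw_sequence a n D \<in> JS a b n"
proof -
  have supp: "\<And>i j. D i j \<noteq> 0 \<Longrightarrow> 1 \<le> i \<and> i \<le> n \<and> i < j"
    and balance: "\<And>i. i \<in> {1..n} \<Longrightarrow> int (\<Sum>j | D i j \<noteq> 0. D i j) = throw_state a D (i - 1) 1"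
    and final: "throw_state a D n = b" using D unfolding throw_matrices_def by auto
  obtain N where N: "\<And>i j. N < j \<Longrightarrow> D i j = 0" using throw_matrix_bounded[OF D a b] by blast
  obtain Na where Na: "\<And>k. Na < k \<Longrightarrow> a k = 0" using juggling_state_bounded[OF a] by blast
  have "juggling_state (throw_state a D m)" for m
  proof -
    have "throw_state a D m k = 0" if "N + Na < k" for k
      using that N Na by (simp add: throw_state_def)
    then have "{k. throw_state a D m k \<noteq> 0} \<subseteq> {..N + Na}"
      by (auto simp: not_le[symmetric])
    then have "finite {k. throw_state a D m k \<noteq> 0}" by (rule finite_subset) simp
    then show ?thesis by (simp add: juggling_state_def throw_state_def)
  qed
  moreover have "juggling_step (throw_state a D (i - 1)) (throw_state a D i)"
    if i: "1 \<le> i" "i \<le> n" for i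
  proof -
    define c where "c k = D i (i + k)" for k
    have "c k = 0" if "N < k" for k
      using N[of "i + k" i] that by (simp add: c_def)
    then have "{k. c k \<noteq> 0} \<subseteq> {..N}"
      by (metis (mono_tags) atMost_iff mem_Collect_eq not_le subsetI)
    then have finite: "finite {k. c k \<noteq> 0}" by (rule finite_subset) simp
    have "(\<Sum>k | c k \<noteq> 0. c k) = (\<Sum>j | D i j \<noteq> 0. D i j)"
      unfolding c_def by (rule sum_shifted_support) (use supp[of i] in force)
    then have thrown: "int (\<Sum>k | c k \<noteq> 0. c k) = throw_state a D (i - 1) 1"
      using balance[of i] i by simp
    have shift: "throw_state a D i k = throw_state a D (i - 1) (k + 1) + int (c k)" if "1 \<le> k" for k
      using throw_state_Suc[OF that, of a D "i - 1"] i by (simp add: c_def)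
    have "c 0 = 0" using supp[of i i] by (metis add_0_right c_def less_irrefl)
    then show ?thesis unfolding juggling_step_def
      by (intro exI[of _ c] conjI allI impI finite thrown shift)
  qed
  moreover have "throw_state a D 0 = a"
    using a throw_state_0 by (simp add: juggling_state_def)
  ultimately show ?thesis
    using final by (auto simp: JS_def nth_throw_sequence)
qed

lemma throws_of_throw_sequence:
  assumes "D \<in> throw_matrices a b n"
  shows "throws_of n (throw_sequence a n D) = D"
proof (intro ext)
  fix i j
  have supp: "D i j \<noteq> 0 \<Longrightarrow> 1 \<le> i \<and> i \<le> n \<and> i < j"
    using assms unfolding throw_matrices_def by auto
  show "throws_of n (throw_sequence a n D) i j = D i j"
  proof (cases "1 \<le> i \<and> i \<le> n \<and> i < j")
    case True
    then have "throw_state a D i (j - i) = throw_state a D (i - 1) (j - i + 1) + int (D i j)"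
      using throw_state_Suc[of "j - i" a D "i - 1"] by auto
    then show ?thesis
      using True by (auto simp: throws_of_def nth_throw_sequence)
  next
    case False
    then show ?thesis using supp by (auto simp: throws_of_def)
  qed
qed

lemma JS_step_throws:
  assumes ss: "ss \<in> JS a b n" and i: "1 \<le> i" "i \<le> n"
  shows "\<And>k. 1 \<le> k \<Longrightarrow> (ss ! i) k = (ss ! (i - 1)) (k + 1) + int (throws_of n ss i (i + k))"
    and "int (\<Sum>j | throws_of n ss i j \<noteq> 0. throws_of n ss i j) = (ss ! (i - 1)) 1"
proof -
  obtain c where c0: "c 0 = 0" and c_sum: "int (\<Sum>k | c k \<noteq> 0. c k) = (ss ! (i - 1)) 1"
    and c_step: "\<And>k. 1 \<le> k \<Longrightarrow> (ss ! i) k = (ss ! (i - 1)) (k + 1) + int (c k)"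
    using ss i unfolding JS_def juggling_step_def by blast
  have c: "c k = throws_of n ss i (i + k)" for k
    using i c0 c_step[of k] by (cases "k = 0") (auto simp: throws_of_def)
  show "(ss ! i) k = (ss ! (i - 1)) (k + 1) + int (throws_of n ss i (i + k))" if "1 \<le> k" for k
    using c_step[OF that] c by simp
  have "(\<Sum>k | c k \<noteq> 0. c k) = (\<Sum>j | throws_of n ss i j \<noteq> 0. throws_of n ss i j)"
    unfolding c by (rule sum_shifted_support) (simp add: throws_of_def)
  then show "int (\<Sum>j | throws_of n ss i j \<noteq> 0. throws_of n ss i j) = (ss ! (i - 1)) 1"
    using c_sum by simp
qed

lemma JS_nth_eq_throw_state:
  assumes ss: "ss \<in> JS a b n"
  shows "m \<le> n \<Longrightarrow> ss ! m = throw_state a (throws_of n ss) m"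
proof (induction m)
  case 0
  then show ?case using ss throw_state_0 by (auto simp: JS_def juggling_state_def)
next
  case (Suc m)
  show ?case
  proof
    fix k
    show "(ss ! Suc m) k = throw_state a (throws_of n ss) (Suc m) k"
    proof (cases "k = 0")
      case True
      then show ?thesis using ss Suc.prems by (simp add: JS_def juggling_state_def throw_state_def)
    next
      case False
      then show ?thesis
        using JS_step_throws(1)[OF ss _ Suc.prems, of k] Suc throw_state_Suc[of k] by simp
    qed
  qed
qed

lemma throws_of_in_throw_matrices:
  assumes ss: "ss \<in> JS a b n"
  shows "throws_of n ss \<in> throw_matrices a b n"
proof -
  have "int (\<Sum>j | throws_of n ss i j \<noteq> 0. throws_of n ss i j) = throw_state a (throws_of n ss) (i - 1) 1"
    if "i \<in> {1..n}" for i
    using that JS_step_throws(2)[OF ss] JS_nth_eq_throw_state[OF ss, of "i - 1"] by auto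
  moreover have "throw_state a (throws_of n ss) n = b"
    using JS_nth_eq_throw_state[OF ss, of n] ss by (simp add: JS_def)
  ultimately show ?thesis unfolding throw_matrices_def by (auto simp: throws_of_def)
qed

lemma throw_sequence_throws_of:
  assumes ss: "ss \<in> JS a b n"
  shows "throw_sequence a n (throws_of n ss) = ss"
proof (rule nth_equalityI)
  show "length (throw_sequence a n (throws_of n ss)) = length ss"
    using ss by (simp add: JS_def)
  show "throw_sequence a n (throws_of n ss) ! m = ss ! m"
    if "m < length (throw_sequence a n (throws_of n ss))" for m
    using that JS_nth_eq_throw_state[OF ss, of m] by (simp add: nth_throw_sequence)
qed

theorem bij_betw_throw_matrices_JS:
  assumes "juggling_state a" "juggling_state b"
  shows "bij_betw (throw_sequence a n) (throw_matrices a b n) (JS a b n)"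
  by (rule bij_betw_byWitness[where f' = "throws_of n"])
    (use assms throws_of_throw_sequence throw_sequence_throws_of throw_sequence_in_JS
       throws_of_in_throw_matrices in auto)

definition highest_root_flows :: "nat \<Rightarrow> (nat \<Rightarrow> nat \<Rightarrow> nat) set" where
  "highest_root_flows r = {D.
     (\<forall>i j. D i j \<noteq> 0 \<longrightarrow> 1 \<le> i \<and> i \<le> r \<and> i < j \<and> j \<le> r + 2) \<and>
     (\<forall>i\<in>{1..r}. (\<Sum>j\<in>{i<..r + 2}. D i j) = (if i \<le> 2 then 1 else 0) + (\<Sum>h\<in>{1..<i}. D h i)) \<and>
     (\<Sum>i\<in>{1..r}. D i (r + 1)) = 1 \<and> (\<Sum>i\<in>{1..r}. D i (r + 2)) = 1}"

lemma throw_state_state11_1: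
  "1 \<le> i \<Longrightarrow> throw_state state11 D (i - 1) 1 = int ((if i \<le> 2 then 1 else 0) + (\<Sum>h\<in>{1..<i}. D h i))"
  by (cases i) (auto simp: throw_state_def state11_def atLeastLessThanSuc_atLeastAtMost)

lemma throw_state_state11_final:
  "2 \<le> r \<Longrightarrow> 1 \<le> k \<Longrightarrow> throw_state state11 D r k = int (\<Sum>i\<in>{1..r}. D i (r + k))"
  by (simp add: throw_state_def state11_def)

lemma sum_row_support:
  fixes D :: "nat \<Rightarrow> nat \<Rightarrow> nat"
  assumes "\<And>j. D i j \<noteq> 0 \<Longrightarrow> i < j \<and> j \<le> m"
  shows "(\<Sum>j | D i j \<noteq> 0. D i j) = (\<Sum>j\<in>{i<..m}. D i j)"
  by (rule sum.mono_neutral_left) (use assms in auto)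

lemma throw_matrices_state11:
  assumes r: "2 \<le> r"
  shows "throw_matrices state11 state11 r = highest_root_flows r"
proof (intro equalityI subsetI)
  fix D assume "D \<in> throw_matrices state11 state11 r"
  then have supp: "\<And>i j. D i j \<noteq> 0 \<Longrightarrow> 1 \<le> i \<and> i \<le> r \<and> i < j"
    and balance: "\<And>i. i \<in> {1..r} \<Longrightarrow> int (\<Sum>j | D i j \<noteq> 0. D i j) = throw_state state11 D (i - 1) 1"
    and final: "throw_state state11 D r = state11"
    unfolding throw_matrices_def by auto
  have landing: "(\<Sum>i\<in>{1..r}. D i (r + k)) = (if k \<le> 2 then 1 else 0)" if "1 \<le> k" for k
    using that fun_cong[OF final, of k] throw_state_state11_final[OF r that]
    by (cases "k = 1 \<or> k = 2") (auto simp: state11_def simp del: of_nat_sum)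
  have high: "j \<le> r + 2" if "D i j \<noteq> 0" for i j
  proof (rule ccontr)
    assume "\<not> j \<le> r + 2"
    then have "(\<Sum>i\<in>{1..r}. D i j) = 0" using landing[of "j - r"] by simp
    then show False using that supp[OF that] by simp
  qed
  have "(\<Sum>j\<in>{i<..r + 2}. D i j) = (if i \<le> 2 then 1 else 0) + (\<Sum>h\<in>{1..<i}. D h i)"
    if i: "i \<in> {1..r}" for i
  proof -
    have "int (\<Sum>j | D i j \<noteq> 0. D i j) = int ((if i \<le> 2 then 1 else 0) + (\<Sum>h\<in>{1..<i}. D h i))"
      using balance[OF i] throw_state_state11_1[of i D] i by simp
    moreover have "(\<Sum>j | D i j \<noteq> 0. D i j) = (\<Sum>j\<in>{i<..r + 2}. D i j)"
      by (rule sum_row_support) (use supp high in blast)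
    ultimately show ?thesis by (simp only: of_nat_eq_iff)
  qed
  then show "D \<in> highest_root_flows r"
    unfolding highest_root_flows_def
    using supp high landing[of 1] landing[of 2] by auto
next
  fix D assume "D \<in> highest_root_flows r"
  then have supp: "\<And>i j. D i j \<noteq> 0 \<Longrightarrow> 1 \<le> i \<and> i \<le> r \<and> i < j \<and> j \<le> r + 2"
    and balance: "\<And>i. i \<in> {1..r} \<Longrightarrow>
       (\<Sum>j\<in>{i<..r + 2}. D i j) = (if i \<le> 2 then 1 else 0) + (\<Sum>h\<in>{1..<i}. D h i)"
    and sinks: "(\<Sum>i\<in>{1..r}. D i (r + 1)) = 1" "(\<Sum>i\<in>{1..r}. D i (r + 2)) = 1"
    unfolding highest_root_flows_def by auto
  have "throw_state state11 D r k = state11 k" for k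
  proof -
    consider "k = 0" | "k = 1" | "k = 2" | "3 \<le> k" by linarith
    then show ?thesis
    proof cases
      case 4
      then have "\<And>i. D i (r + k) = 0" using supp by fastforce
      then show ?thesis using 4 r throw_state_state11_final[OF r, of k] by (simp add: state11_def)
    qed (use sinks r throw_state_state11_final[OF r] in \<open>auto simp: throw_state_def state11_def\<close>)
  qed
  moreover have "int (\<Sum>j | D i j \<noteq> 0. D i j) = throw_state state11 D (i - 1) 1"
    if i: "i \<in> {1..r}" for i
  proof -
    have "(\<Sum>j | D i j \<noteq> 0. D i j) = (\<Sum>j\<in>{i<..r + 2}. D i j)"
      by (rule sum_row_support) (use supp in blast)
    then show ?thesis using balance[OF i] throw_state_state11_1[of i D] i by simp
  qed
  ultimately show "D \<in> throw_matrices state11 state11 r"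
    unfolding throw_matrices_def using supp by auto
qed

section \<open>Partitions of the highest root as flows\<close>

lemma multiset_eq_sum_replicate_count:
  assumes "finite S" "inj_on f S" "set_mset M \<subseteq> f ` S"
  shows "M = (\<Sum>x\<in>S. replicate_mset (count M (f x)) (f x))"
proof (rule multiset_eqI)
  fix y
  show "count M y = count (\<Sum>x\<in>S. replicate_mset (count M (f x)) (f x)) y"
  proof (cases "y \<in> f ` S")
    case True
    then obtain x where x: "x \<in> S" "y = f x" by blast
    have "(\<Sum>x'\<in>S. if y = f x' then count M (f x') else 0) = (\<Sum>x'\<in>S. if x' = x then count M y else 0)"
      using assms(2) x by (intro sum.cong) (auto simp: inj_on_def)
    then show ?thesis using x assms(1) by (simp add: count_sum)
  next
    case False
    then have "count M y = 0" using assms(3) by (meson count_eq_zero_iff subsetD)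
    moreover have "(\<Sum>x\<in>S. if y = f x then count M (f x) else 0) = 0"
      using False by (intro sum.neutral) auto
    ultimately show ?thesis by (simp add: count_sum)
  qed
qed

lemma sum_mset_sum_replicate:
  fixes h :: "'a \<Rightarrow> 'b :: semiring_1"
  assumes "finite S"
  shows "(\<Sum>v\<in>#(\<Sum>x\<in>S. replicate_mset (g x) (f x)). h v) = (\<Sum>x\<in>S. of_nat (g x) * h (f x))"
  using assms by (induction S rule: finite_induct) auto

lemma sum_eq_1_imp_unit:
  fixes f :: "'a \<Rightarrow> nat"
  assumes "finite S" "(\<Sum>i\<in>S. f i) = 1" "\<And>i. i \<notin> S \<Longrightarrow> f i = 0"
  obtains a where "a \<in> S" "\<And>i. f i = (if i = a then 1 else 0)"
proof -
  obtain a where a: "a \<in> S" "f a \<noteq> 0" using assms(2) by (metis sum.neutral zero_neq_one)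
  have "(\<Sum>i\<in>S. f i) = f a + (\<Sum>i\<in>S - {a}. f i)" using a assms(1) by (simp add: sum.remove)
  then have "f a = 1" "(\<Sum>i\<in>S - {a}. f i) = 0" using a assms(2) by linarith+
  then have "f a = 1" "\<forall>i\<in>S - {a}. f i = 0" using assms(1) by simp_all
  then show ?thesis using that[OF a(1)] assms(3) by (metis DiffI singletonD)
qed

definition diff_root :: "nat \<Rightarrow> nat \<Rightarrow> nat \<Rightarrow> int" where
  "diff_root i j = (\<lambda>k. eps i k - eps j k)"

definition diff_pairs :: "nat \<Rightarrow> (nat \<times> nat) set" where
  "diff_pairs r = {(i, j). 1 \<le> i \<and> i < j \<and> j \<le> r}"

definition diff_roots :: "nat \<Rightarrow> (nat \<Rightarrow> int) set" where
  "diff_roots r = case_prod diff_root ` diff_pairs r"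

text \<open>The roots of a partition of \<open>\<epsilon>\<^sub>1 + \<epsilon>\<^sub>2\<close> not of the form \<open>\<epsilon>\<^sub>i - \<epsilon>\<^sub>j\<close> are either
  two short roots \<open>\<epsilon>\<^sub>a, \<epsilon>\<^sub>b\<close> with \<open>a \<le> b\<close> or one long root \<open>\<epsilon>\<^sub>b + \<epsilon>\<^sub>a\<close> with \<open>b < a\<close>;
  either way they are encoded by an arbitrary pair \<open>(a, b) \<in> [1, r]\<^sup>2\<close>.\<close>
definition sink_roots :: "nat \<Rightarrow> nat \<Rightarrow> (nat \<Rightarrow> int) multiset" where
  "sink_roots a b = (if a \<le> b then {#eps a, eps b#} else {#(\<lambda>k. eps b k + eps a k)#})"

definition unit_column_row :: "(nat \<Rightarrow> nat \<Rightarrow> nat) \<Rightarrow> nat \<Rightarrow> nat" where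
  "unit_column_row D h = (THE a. \<forall>i. D i h = (if i = a then 1 else 0))"

definition root_multiset :: "nat \<Rightarrow> (nat \<Rightarrow> nat \<Rightarrow> nat) \<Rightarrow> nat \<Rightarrow> nat \<Rightarrow> (nat \<Rightarrow> int) multiset" where
  "root_multiset r D a b = (\<Sum>(i, j)\<in>diff_pairs r. replicate_mset (D i j) (diff_root i j)) + sink_roots a b"

definition flow_partition :: "nat \<Rightarrow> (nat \<Rightarrow> nat \<Rightarrow> nat) \<Rightarrow> (nat \<Rightarrow> int) multiset" where
  "flow_partition r D = root_multiset r D (unit_column_row D (r + 1)) (unit_column_row D (r + 2))"

lemma finite_diff_pairs [simp]: "finite (diff_pairs r)"
  by (rule finite_subset[of _ "{1..r} \<times> {1..r}"]) (auto simp: diff_pairs_def)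

lemma inj_on_diff_root: "inj_on (case_prod diff_root) (diff_pairs r)"
proof (rule inj_onI, clarsimp simp: diff_pairs_def)
  fix i j i' j' :: nat
  assume "diff_root i j = diff_root i' j'" "i < j" "i' < j'"
  then have "eps i i - eps j i = eps i' i - eps j' i" "eps i j - eps j j = eps i' j - eps j' j"
    unfolding diff_root_def by meson+
  then show "i = i' \<and> j = j'" using \<open>i < j\<close> \<open>i' < j'\<close> unfolding eps_def by (auto split: if_splits)
qed

lemma sink_roots_not_diff_root: "v \<in># sink_roots a b \<Longrightarrow> v \<notin> diff_roots r"
proof
  assume "v \<in># sink_roots a b" "v \<in> diff_roots r"
  then have "\<forall>k. 0 \<le> v k" by (auto simp: sink_roots_def eps_def split: if_splits)
  moreover obtain i j where "v = diff_root i j" "i < j"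
    using \<open>v \<in> diff_roots r\<close> by (auto simp: diff_roots_def diff_pairs_def)
  ultimately show False by (auto simp: diff_root_def eps_def dest: spec[of _ j])
qed

lemma sink_roots_inj: "sink_roots a b = sink_roots a' b' \<Longrightarrow> a = a' \<and> b = b'"
  unfolding sink_roots_def
  by (auto simp: add_eq_conv_diff fun_eq_iff eps_def split: if_splits)

lemma unit_column_row_eq:
  assumes "\<And>i. D i h = (if i = a then 1 else 0)"
  shows "unit_column_row D h = a"
  unfolding unit_column_row_def
proof (rule the_equality)
  fix a' assume "\<forall>i. D i h = (if i = a' then 1 else 0)"
  then show "a' = a" using assms by (metis zero_neq_one)
qed (use assms in simp)

lemma highest_root_flow_support:
  assumes "D \<in> highest_root_flows r" "D i j \<noteq> 0"
  shows "(i, j) \<in> diff_pairs r \<or> j = r + 1 \<or> j = r + 2"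
  using assms unfolding highest_root_flows_def diff_pairs_def by fastforce

lemma highest_root_flow_sink:
  assumes "D \<in> highest_root_flows r" "h = r + 1 \<or> h = r + 2"
  shows "unit_column_row D h \<in> {1..r}" "\<And>i. D i h = (if i = unit_column_row D h then 1 else 0)"
proof -
  have "(\<Sum>i\<in>{1..r}. D i h) = 1" "\<And>i. i \<notin> {1..r} \<Longrightarrow> D i h = 0"
    using assms unfolding highest_root_flows_def by auto
  then obtain a where "a \<in> {1..r}" "\<And>i. D i h = (if i = a then 1 else 0)"
    using sum_eq_1_imp_unit[of "{1..r}" "\<lambda>i. D i h"] by blast
  then show "unit_column_row D h \<in> {1..r}" "\<And>i. D i h = (if i = unit_column_row D h then 1 else 0)"
    using unit_column_row_eq[of D h a] by simp_all
qed

lemma sum_diff_pairs_diff_root: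
  "(\<Sum>(i, j)\<in>diff_pairs r. int (D i j) * diff_root i j k) =
     (if k \<in> {1..r} then int (\<Sum>j\<in>{k<..r}. D k j) - int (\<Sum>i\<in>{1..<k}. D i k) else 0)"
proof -
  have "diff_pairs r = Sigma {1..r} (\<lambda>i. {i<..r})" by (auto simp: diff_pairs_def)
  then have "(\<Sum>(i, j)\<in>diff_pairs r. int (D i j) * diff_root i j k)
      = (\<Sum>i\<in>{1..r}. \<Sum>j\<in>{i<..r}. int (D i j) * diff_root i j k)"
    by (simp add: sum.Sigma)
  also have "\<dots> = (\<Sum>i\<in>{1..r}. \<Sum>j\<in>{i<..r}. if i = k then int (D i j) else 0)
      - (\<Sum>i\<in>{1..r}. \<Sum>j\<in>{i<..r}. if j = k then int (D i j) else 0)"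
    unfolding sum_subtractf[symmetric]
    by (intro sum.cong refl) (auto simp: diff_root_def eps_def)
  also have "(\<Sum>i\<in>{1..r}. \<Sum>j\<in>{i<..r}. if i = k then int (D i j) else 0)
      = (\<Sum>i\<in>{1..r}. if i = k then (\<Sum>j\<in>{i<..r}. int (D i j)) else 0)"
    by (intro sum.cong refl) simp
  also have "\<dots> = (if k \<in> {1..r} then int (\<Sum>j\<in>{k<..r}. D k j) else 0)"
    by (simp only: sum.delta finite_atLeastAtMost of_nat_sum)
  also have "(\<Sum>i\<in>{1..r}. \<Sum>j\<in>{i<..r}. if j = k then int (D i j) else 0)
      = (\<Sum>i\<in>{1..r}. if i < k \<and> k \<le> r then int (D i k) else 0)"
    by (intro sum.cong refl) (simp add: sum.delta)
  also have "\<dots> = (\<Sum>i\<in>{i \<in> {1..r}. i < k \<and> k \<le> r}. int (D i k))"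
    by (simp only: sum.inter_filter[symmetric] finite_atLeastAtMost)
  also have "{i \<in> {1..r}. i < k \<and> k \<le> r} = (if k \<in> {1..r} then {1..<k} else {})"
    by auto
  finally show ?thesis by simp
qed

lemma coordinate_root_multiset:
  "(\<Sum>v\<in>#root_multiset r D a b. v k) =
     (\<Sum>(i, j)\<in>diff_pairs r. int (D i j) * diff_root i j k) + eps a k + eps b k"
  using sum_mset_sum_replicate[of "diff_pairs r" "\<lambda>v. v k" "case_prod D" "case_prod diff_root"]
  by (simp add: root_multiset_def sink_roots_def split_def add.commute)

lemma flow_balance_iff_coordinate:
  fixes D :: "nat \<Rightarrow> nat \<Rightarrow> nat"
  assumes k: "k \<in> {1..r}" and r: "2 \<le> r"
    and sink_a: "\<And>i. D i (r + 1) = (if i = a then 1 else 0)"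
    and sink_b: "\<And>i. D i (r + 2) = (if i = b then 1 else 0)"
  shows "(\<Sum>j\<in>{k<..r + 2}. D k j) = (if k \<le> 2 then 1 else 0) + (\<Sum>i\<in>{1..<k}. D i k) \<longleftrightarrow>
         (\<Sum>v\<in>#root_multiset r D a b. v k) = highest_root_B k"
proof -
  have "{k<..r + 2} = insert (r + 2) (insert (r + 1) {k<..r})" using k by auto
  then have "(\<Sum>j\<in>{k<..r + 2}. D k j) = (if k = b then 1 else 0) + (if k = a then 1 else 0) + (\<Sum>j\<in>{k<..r}. D k j)"
    using sink_a sink_b by simp
  moreover have "highest_root_B k = (if k \<le> 2 then 1 else 0)"
    using k by (auto simp: highest_root_B_def eps_def)
  ultimately show ?thesis
    using k unfolding coordinate_root_multiset sum_diff_pairs_diff_root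
    by (auto simp: eps_def simp del: of_nat_sum)
qed

lemma sink_roots_subset_posroots:
  assumes "a \<in> {1..r}" "b \<in> {1..r}"
  shows "set_mset (sink_roots a b) \<subseteq> posroots_B r"
proof (cases "a \<le> b")
  case True
  then show ?thesis using assms by (auto simp: sink_roots_def posroots_B_def)
next
  case False
  then have "(\<lambda>k. eps b k + eps a k) \<in> {(\<lambda>k. eps i k + eps j k) | i j. 1 \<le> i \<and> i < j \<and> j \<le> r}"
    using assms by (intro CollectI exI[of _ b] exI[of _ a]) auto
  then show ?thesis using False by (auto simp: sink_roots_def posroots_B_def)
qed

lemma diff_roots_subset_posroots: "diff_roots r \<subseteq> posroots_B r"
  unfolding diff_roots_def diff_pairs_def posroots_B_def diff_root_def by auto

lemma set_mset_sum_replicate_diff_root: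
  "set_mset (\<Sum>(i, j)\<in>diff_pairs r. replicate_mset (D i j) (diff_root i j)) \<subseteq> diff_roots r"
  by (auto simp: set_mset_sum diff_roots_def split: if_splits)

lemma flow_partition_in_root_partitions:
  assumes D: "D \<in> highest_root_flows r" and r: "2 \<le> r"
  shows "flow_partition r D \<in> root_partitions_B r highest_root_B"
proof -
  define a where "a = unit_column_row D (r + 1)"
  define b where "b = unit_column_row D (r + 2)"
  have ab: "a \<in> {1..r}" "b \<in> {1..r}"
    and sink_a: "\<And>i. D i (r + 1) = (if i = a then 1 else 0)"
    and sink_b: "\<And>i. D i (r + 2) = (if i = b then 1 else 0)"
    using highest_root_flow_sink[OF D] unfolding a_def b_def by auto
  have balance: "\<And>k. k \<in> {1..r} \<Longrightarrow>
      (\<Sum>j\<in>{k<..r + 2}. D k j) = (if k \<le> 2 then 1 else 0) + (\<Sum>i\<in>{1..<k}. D i k)"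
    using D unfolding highest_root_flows_def by blast
  have "(\<Sum>v\<in>#root_multiset r D a b. v k) = highest_root_B k" for k
  proof (cases "k \<in> {1..r}")
    case True
    then show ?thesis using flow_balance_iff_coordinate[OF True r sink_a sink_b] balance by blast
  next
    case False
    then show ?thesis using ab r
      unfolding coordinate_root_multiset sum_diff_pairs_diff_root
      by (auto simp: eps_def highest_root_B_def)
  qed
  moreover have "set_mset (root_multiset r D a b) \<subseteq> posroots_B r"
    using set_mset_sum_replicate_diff_root diff_roots_subset_posroots sink_roots_subset_posroots[OF ab]
    by (fastforce simp: root_multiset_def)
  ultimately show ?thesis
    unfolding root_partitions_B_def flow_partition_def a_def b_def by auto
qed

lemma count_root_multiset:
  assumes p: "(i, j) \<in> diff_pairs r"
  shows "count (root_multiset r D a b) (diff_root i j) = D i j"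
proof -
  have "diff_root i j \<in> diff_roots r" using p by (auto simp: diff_roots_def)
  then have "count (sink_roots a b) (diff_root i j) = 0"
    using sink_roots_not_diff_root by (meson count_inI)
  moreover have "(\<Sum>(i', j')\<in>diff_pairs r. if diff_root i j = diff_root i' j' then D i' j' else 0)
      = (\<Sum>q\<in>diff_pairs r. if q = (i, j) then D i j else 0)"
  proof (rule sum.cong)
    fix q assume "q \<in> diff_pairs r"
    then have "diff_root i j = case_prod diff_root q \<longleftrightarrow> q = (i, j)"
      using inj_on_eq_iff[OF inj_on_diff_root p] by auto
    then show "(case q of (i', j') \<Rightarrow> if diff_root i j = diff_root i' j' then D i' j' else 0)
        = (if q = (i, j) then D i j else 0)"
      by (auto split: prod.splits)
  qed simp
  ultimately show ?thesis
    using p by (simp add: root_multiset_def count_sum split_def)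
qed

lemma filter_root_multiset:
  "filter_mset (\<lambda>v. v \<notin> diff_roots r) (root_multiset r D a b) = sink_roots a b"
proof -
  have "filter_mset (\<lambda>v. v \<notin> diff_roots r) (\<Sum>(i, j)\<in>diff_pairs r. replicate_mset (D i j) (diff_root i j)) = {#}"
    using set_mset_sum_replicate_diff_root[where D = D and r = r] by auto
  moreover have "filter_mset (\<lambda>v. v \<notin> diff_roots r) (sink_roots a b) = filter_mset (\<lambda>v. True) (sink_roots a b)"
    by (rule filter_mset_cong0) (use sink_roots_not_diff_root in blast)
  ultimately show ?thesis by (simp add: root_multiset_def)
qed

lemma inj_on_flow_partition: "inj_on (flow_partition r) (highest_root_flows r)"
proof (rule inj_onI)
  fix D D' assume D: "D \<in> highest_root_flows r" and D': "D' \<in> highest_root_flows r"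
    and eq: "flow_partition r D = flow_partition r D'"
  have same_sinks: "unit_column_row D (r + 1) = unit_column_row D' (r + 1) \<and> unit_column_row D (r + 2) = unit_column_row D' (r + 2)"
    using arg_cong[OF eq, of "filter_mset (\<lambda>v. v \<notin> diff_roots r)"]
    by (intro sink_roots_inj) (simp add: flow_partition_def filter_root_multiset)
  show "D = D'"
  proof (intro ext)
    fix i j
    consider "(i, j) \<in> diff_pairs r" | "j = r + 1" | "j = r + 2"
      | "(i, j) \<notin> diff_pairs r" "j \<noteq> r + 1" "j \<noteq> r + 2" by blast
    then show "D i j = D' i j"
    proof cases
      case 1
      then show ?thesis
        using arg_cong[OF eq, of "\<lambda>M. count M (diff_root i j)"]
        by (simp add: flow_partition_def count_root_multiset)
    next
      case 2
      then show ?thesis using same_sinks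
          highest_root_flow_sink(2)[OF D, of j i] highest_root_flow_sink(2)[OF D', of j i] by simp
    next
      case 3
      then show ?thesis using same_sinks
          highest_root_flow_sink(2)[OF D, of j i] highest_root_flow_sink(2)[OF D', of j i] by simp
    next
      case 4
      then show ?thesis using highest_root_flow_support[OF D] highest_root_flow_support[OF D'] by metis
    qed
  qed
qed

definition coordinate_sum :: "nat \<Rightarrow> (nat \<Rightarrow> int) \<Rightarrow> int" where
  "coordinate_sum r v = (\<Sum>k\<in>{1..r}. v k)"

lemma coordinate_sum_eps: "i \<in> {1..r} \<Longrightarrow> coordinate_sum r (eps i) = 1"
  by (simp add: coordinate_sum_def eps_def)

lemma coordinate_sum_long_root:
  "i \<in> {1..r} \<Longrightarrow> j \<in> {1..r} \<Longrightarrow> coordinate_sum r (\<lambda>k. eps i k + eps j k) = 2"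
  using coordinate_sum_eps[of i r] coordinate_sum_eps[of j r]
  by (simp add: coordinate_sum_def sum.distrib)

lemma coordinate_sum_diff_root: "v \<in> diff_roots r \<Longrightarrow> coordinate_sum r v = 0"
  using coordinate_sum_eps
  by (auto simp: diff_roots_def diff_pairs_def diff_root_def coordinate_sum_def sum_subtractf)

lemma sum_mset_coordinate_sum:
  "(\<Sum>v\<in>#M. coordinate_sum r v) = (\<Sum>k\<in>{1..r}. \<Sum>v\<in>#M. v k)"
  by (induction M) (simp_all add: coordinate_sum_def sum.distrib)

lemma posroot_not_diff_root_cases:
  assumes "v \<in> posroots_B r" "v \<notin> diff_roots r"
  obtains (short) i where "i \<in> {1..r}" "v = eps i"
    | (long) i j where "1 \<le> i" "i < j" "j \<le> r" "v = (\<lambda>k. eps i k + eps j k)"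
  using assms unfolding posroots_B_def diff_roots_def diff_pairs_def diff_root_def
  by (auto simp: image_iff)

text \<open>The roots \<open>\<epsilon>\<^sub>i - \<epsilon>\<^sub>j\<close> have coordinate sum 0, short roots 1 and long roots 2,
  while \<open>\<epsilon>\<^sub>1 + \<epsilon>\<^sub>2\<close> has coordinate sum 2.\<close>
lemma non_diff_roots_of_highest_root_partition:
  assumes M: "M \<in> root_partitions_B r highest_root_B" and r: "2 \<le> r"
  obtains a b where "a \<in> {1..r}" "b \<in> {1..r}" "filter_mset (\<lambda>v. v \<notin> diff_roots r) M = sink_roots a b"
proof -
  define N where "N = filter_mset (\<lambda>v. v \<notin> diff_roots r) M"
  have roots: "set_mset M \<subseteq> posroots_B r" and coords: "\<And>k. (\<Sum>v\<in>#M. v k) = highest_root_B k"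
    using M unfolding root_partitions_B_def by (auto dest: fun_cong)
  have "(\<Sum>v\<in>#M. coordinate_sum r v) = coordinate_sum r highest_root_B"
    by (simp only: sum_mset_coordinate_sum coords) (simp only: coordinate_sum_def)
  also have "\<dots> = 2"
    using coordinate_sum_long_root[of 1 r 2] r by (simp add: highest_root_B_def)
  finally have total_M: "(\<Sum>v\<in>#M. coordinate_sum r v) = 2" .
  have "M = filter_mset (\<lambda>v. v \<in> diff_roots r) M + N"
    unfolding N_def by (rule multiset_partition)
  then have "(\<Sum>v\<in>#M. coordinate_sum r v)
      = (\<Sum>v\<in>#filter_mset (\<lambda>v. v \<in> diff_roots r) M. coordinate_sum r v) + (\<Sum>v\<in>#N. coordinate_sum r v)"
    by (metis image_mset_union sum_mset.union)
  moreover have "(\<Sum>v\<in>#filter_mset (\<lambda>v. v \<in> diff_roots r) M. coordinate_sum r v) = 0"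
    by (rule sum_mset.neutral) (simp add: coordinate_sum_diff_root)
  ultimately have total: "(\<Sum>v\<in>#N. coordinate_sum r v) = 2" using total_M by simp
  have classes: "(\<exists>i\<in>{1..r}. v = eps i) \<or>
      (\<exists>i j. 1 \<le> i \<and> i < j \<and> j \<le> r \<and> v = (\<lambda>k. eps i k + eps j k))" if "v \<in># N" for v
  proof -
    have "v \<in> posroots_B r" "v \<notin> diff_roots r" using that roots by (auto simp: N_def)
    then show ?thesis by (cases rule: posroot_not_diff_root_cases) blast+
  qed
  have short: "coordinate_sum r v = 1" if "\<exists>i\<in>{1..r}. v = eps i" for v
    using that coordinate_sum_eps by blast
  have long: "coordinate_sum r v = 2"
    if "\<exists>i j. 1 \<le> i \<and> i < j \<and> j \<le> r \<and> v = (\<lambda>k. eps i k + eps j k)" for v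
    using that coordinate_sum_long_root by fastforce
  have positive: "1 \<le> coordinate_sum r v" if "v \<in># N" for v
    using classes[OF that] short long by (elim disjE) simp_all
  have "int (size N) \<le> (\<Sum>v\<in>#N. coordinate_sum r v)"
    using sum_mset_mono[of N "\<lambda>_. 1 :: int" "coordinate_sum r"] positive by simp
  then have "size N = 1 \<or> size N = 2"
    using total by (cases "size N") auto
  then show ?thesis
  proof
    assume "size N = 1"
    then obtain v where N: "N = {#v#}" using size_1_singleton_mset by blast
    then have "\<not> (\<exists>i\<in>{1..r}. v = eps i)" using short[of v] total by auto
    then obtain i j where "1 \<le> i" "i < j" "j \<le> r" "v = (\<lambda>k. eps i k + eps j k)"
      using classes[of v] N by auto
    then show ?thesis using that[of j i] N by (simp add: N_def sink_roots_def)
  next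
    assume "size N = 2"
    then obtain u v where N: "N = {#u, v#}"
      by (metis One_nat_def Suc_1 size_1_singleton_mset size_mset_SucE add_mset_add_single)
    then have "coordinate_sum r u = 1" "coordinate_sum r v = 1"
      using positive[of u] positive[of v] total by simp_all
    then obtain i j where "i \<in> {1..r}" "j \<in> {1..r}" "u = eps i" "v = eps j"
      using classes[of u] classes[of v] long[of u] long[of v] N by fastforce
    then show ?thesis
      using that[of i j] that[of j i] N by (cases "i \<le> j") (auto simp: N_def sink_roots_def add_mset_commute)
  qed
qed

lemma flow_partition_surj:
  assumes M: "M \<in> root_partitions_B r highest_root_B" and r: "2 \<le> r"
  shows "\<exists>D\<in>highest_root_flows r. flow_partition r D = M"
proof -
  obtain a b where ab: "a \<in> {1..r}" "b \<in> {1..r}"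
    and sinks: "filter_mset (\<lambda>v. v \<notin> diff_roots r) M = sink_roots a b"
    using non_diff_roots_of_highest_root_partition[OF M r] by blast
  define D where "D i j =
    (if (i, j) \<in> diff_pairs r then count M (diff_root i j)
     else if i \<in> {1..r} \<and> j = r + 1 then (if i = a then 1 else 0)
     else if i \<in> {1..r} \<and> j = r + 2 then (if i = b then 1 else 0) else 0)" for i j
  have not_pair: "(i, r + 1) \<notin> diff_pairs r" "(i, r + 2) \<notin> diff_pairs r" for i
    by (auto simp: diff_pairs_def)
  have sink_a: "D i (r + 1) = (if i = a then 1 else 0)" for i
    using ab not_pair by (auto simp: D_def)
  have sink_b: "D i (r + 2) = (if i = b then 1 else 0)" for i
    using ab not_pair by (auto simp: D_def)
  let ?diff_part = "filter_mset (\<lambda>v. v \<in> diff_roots r) M"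
  have "?diff_part = (\<Sum>p\<in>diff_pairs r. replicate_mset (count ?diff_part (case_prod diff_root p)) (case_prod diff_root p))"
    by (rule multiset_eq_sum_replicate_count[OF finite_diff_pairs inj_on_diff_root])
      (auto simp: diff_roots_def)
  also have "\<dots> = (\<Sum>(i, j)\<in>diff_pairs r. replicate_mset (D i j) (diff_root i j))"
    by (intro sum.cong refl) (auto simp: D_def diff_roots_def)
  finally have "root_multiset r D a b = M"
    using sinks multiset_partition[of M "\<lambda>v. v \<in> diff_roots r"] by (simp add: root_multiset_def)
  then have partition: "flow_partition r D = M"
    using unit_column_row_eq[of D "r + 1" a] unit_column_row_eq[of D "r + 2" b] sink_a sink_b
    by (simp add: flow_partition_def)
  have coords: "(\<Sum>v\<in>#root_multiset r D a b. v k) = highest_root_B k" for k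
    using M \<open>root_multiset r D a b = M\<close> unfolding root_partitions_B_def by (auto dest: fun_cong)
  have "1 \<le> i \<and> i \<le> r \<and> i < j \<and> j \<le> r + 2" if "D i j \<noteq> 0" for i j
    using that by (auto simp: D_def diff_pairs_def split: if_splits)
  moreover have "(\<Sum>j\<in>{k<..r + 2}. D k j) = (if k \<le> 2 then 1 else 0) + (\<Sum>i\<in>{1..<k}. D i k)"
    if k: "k \<in> {1..r}" for k
    using flow_balance_iff_coordinate[OF k r sink_a sink_b] coords by blast
  moreover have "(\<Sum>i\<in>{1..r}. D i (r + 1)) = 1" "(\<Sum>i\<in>{1..r}. D i (r + 2)) = 1"
    unfolding sink_a sink_b using ab by simp_all
  ultimately have "D \<in> highest_root_flows r" unfolding highest_root_flows_def by blast
  then show ?thesis using partition by blast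
qed

lemma bij_betw_flow_partition:
  assumes "2 \<le> r"
  shows "bij_betw (flow_partition r) (highest_root_flows r) (root_partitions_B r highest_root_B)"
  unfolding bij_betw_def
proof (intro conjI inj_on_flow_partition equalityI subsetI)
  fix M assume "M \<in> flow_partition r ` highest_root_flows r"
  then show "M \<in> root_partitions_B r highest_root_B"
    using flow_partition_in_root_partitions assms by blast
next
  fix M assume "M \<in> root_partitions_B r highest_root_B"
  then show "M \<in> flow_partition r ` highest_root_flows r"
    using flow_partition_surj assms by blast
qed

lemma juggling_state_state11: "juggling_state state11"
proof -
  have "{k. state11 k \<noteq> 0} = {1, 2}" by (auto simp: state11_def)
  then show ?thesis by (simp add: juggling_state_def state11_def)
qed

theorem mainTheorem11:
  fixes r :: nat
  assumes "r \<ge> 2"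
  shows "(\<exists>f. bij_betw f (root_partitions_B r highest_root_B) (JS state11 state11 r))
         \<and> K_B r highest_root_B = js state11 state11 r"
proof -
  have "bij_betw (throw_sequence state11 r) (highest_root_flows r) (JS state11 state11 r)"
    using bij_betw_throw_matrices_JS[OF juggling_state_state11 juggling_state_state11, of r]
    unfolding throw_matrices_state11[OF assms] .
  then have "bij_betw (throw_sequence state11 r \<circ> inv_into (highest_root_flows r) (flow_partition r))
      (root_partitions_B r highest_root_B) (JS state11 state11 r)"
    by (rule bij_betw_trans[OF bij_betw_inv_into[OF bij_betw_flow_partition[OF assms]]])
  then show ?thesis
    unfolding K_B_def js_def using bij_betw_same_card by blast
qed

end
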